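(* Let $p,w,v$ be positive integers with $1\le v\le w$, let $\mathbf{A}$ be a $p\times p$ matrix and $\mathbf{B}$ a $w\times p$ matrix over $\mathbb{F}_2$, and let $\mathbf{x}_0\in\mathbb{F}_2^p$ be a nonzero initial state. Define $\mathbf{x}_i=\mathbf{A}\mathbf{x}_{i-1}$ and $\mathbf{y}_i=\mathbf{B}\mathbf{x}_i={}^t(y_{i,0},\dots,y_{i,w-1})$ for $i\ge 0$. Assume the characteristic polynomial $P(z)=\det(\mathbf{I}z-\mathbf{A})$ is irreducible over $\mathbb{F}_2$ (e.g. primitive), and that $h_0(z)\neq 0$ (notation as in the context). Let $k\ge 1$ and $w_{j,l-1}\in\mathbb{F}_2$ for $0\le j\le k-1$, $1\le l\le v$, and put $w_{l-1}(z):=\sum_{j=0}^{k-1}w_{j,l-1}z^j\in\mathbb{F}_2[z]$. Then $$\sum_{l=1}^{v}\sum_{j=0}^{k-1} w_{j,l-1}\,y_{i+j,l-1}=0\quad\text{for all } i\ge 0$$ holds if and only if ${}^t(w_0(z),\dots,w_{v-1}(z))\in\mathcal{L}_v^*$.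
   Context: For $1\le l\le w$ define the formal power series $G_{l-1}(z):=\sum_{i=0}^\infty y_{i,l-1}z^{-i-1}\in\mathbb{F}_2((z^{-1}))$. Each has the rational form $G_{l-1}(z)=h_{l-1}(z)/P(z)$ with $h_{l-1}(z)\in\mathbb{F}_2[z]$, $\deg h_{l-1}<\deg P$. Assuming $P$ irreducible and $h_0\neq 0$, let $h_0^{-1}(z)$ denote a polynomial inverse of $h_0(z)$ modulo $P(z)$ and set $\bar h_{l-1}(z):=h_0^{-1}(z)h_{l-1}(z)\bmod P(z)$ for $2\le l\le v$. The Couture–L'Ecuyer dual lattice is the $\mathbb{F}_2[z]$-submodule $\mathcal{L}_v^*\subset\mathbb{F}_2[z]^v$ spanned over $\mathbb{F}_2[z]$ by $\mathbf{w}_1(z)={}^t(P(z),0,\dots,0)$ and $\mathbf{w}_{l}(z)={}^t(-\bar h_{l-1}(z),0,\dots,0,1,0,\dots,0)$ for $2\le l\le v$, where the entry $1$ is in coordinate $l$ (signs are irrelevant over $\mathbb{F}_2$). *)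

theory Defs
  imports "HOL-Library.Z2" "HOL-Computational_Algebra.Polynomial" "Jordan_Normal_Form.Char_Poly"
begin

definition out_seq :: "bit mat \<Rightarrow> bit mat \<Rightarrow> bit vec \<Rightarrow> nat \<Rightarrow> nat \<Rightarrow> bit" where
  "out_seq A B x0 i j = (B *\<^sub>v ((A ^\<^sub>m i) *\<^sub>v x0)) $ j"

text \<open>h_j: the polynomial numerator of G_j(z) = sum_i y_{i,j} z^(-i-1) = h_j(z)/P(z),
  i.e. the polynomial part of P(z) G_j(z): coefficient of z^n is
  sum over d from n+1 to deg P of coeff P d * y_{d-n-1,j}.\<close>

definition h_poly :: "bit poly \<Rightarrow> (nat \<Rightarrow> nat \<Rightarrow> bit) \<Rightarrow> nat \<Rightarrow> bit poly" where
  "h_poly P y j = (\<Sum>n<degree P. monom (\<Sum>d\<in>{n+1..degree P}. coeff P d * y (d - n - 1) j) n)"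

definition inv_mod :: "bit poly \<Rightarrow> bit poly \<Rightarrow> bit poly" where
  "inv_mod P h = (SOME q. (h * q) mod P = 1)"

definition hbar :: "bit poly \<Rightarrow> (nat \<Rightarrow> nat \<Rightarrow> bit) \<Rightarrow> nat \<Rightarrow> bit poly" where
  "hbar P y j = (inv_mod P (h_poly P y 0) * h_poly P y j) mod P"

text \<open>Generators of the dual lattice, vectors indexed by coordinates 0..v-1
  (paper coordinate l is index l-1). gen l for 1 \<le> l \<le> v.\<close>
definition dual_gen :: "bit poly \<Rightarrow> (nat \<Rightarrow> nat \<Rightarrow> bit) \<Rightarrow> nat \<Rightarrow> nat \<Rightarrow> bit poly" where
  "dual_gen P y l idx =
     (if l = 1 then (if idx = 0 then P else 0)
      else (if idx = 0 then - hbar P y (l - 1) else if idx = l - 1 then 1 else 0))"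

definition in_dual_lattice :: "bit poly \<Rightarrow> (nat \<Rightarrow> nat \<Rightarrow> bit) \<Rightarrow> nat \<Rightarrow> (nat \<Rightarrow> bit poly) \<Rightarrow> bool" where
  "in_dual_lattice P y v ws \<longleftrightarrow>
     (\<exists>c :: nat \<Rightarrow> bit poly. \<forall>idx<v. ws idx = (\<Sum>l=1..v. c l * dual_gen P y l idx))"

end

theory Submission
  imports Defs
begin

text \<open>By Cayley-Hamilton every output coordinate sequence satisfies the linear recurrence with
  characteristic polynomial P, so its generating function is h/P with deg h < deg P, where h is
  determined by P and the first deg P terms. Shifting such a sequence by one step multiplies its
  numerator by z modulo P. Hence the sequence T_i(n) = sum_l sum_j w_{j,l} y_{n+i+j,l} has a
  numerator congruent to z^i sum_l w_l h_l; as the top coefficient of the numerator is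
  lead_coeff P * T_i(0) and its degree is below deg P, all T_i(0) vanish iff P divides
  sum_l w_l h_l. Finally h_0 is invertible modulo the prime P and h_0 hbar_l = h_l mod P, so this
  divisibility is equivalent to P dividing w_0 + sum_{l>=1} w_l hbar_l, which is membership in
  the lattice spanned by the given generators.\<close>

lemma irreducible_imp_degree_pos:
  fixes P :: "'a::field poly"
  assumes "irreducible P"
  shows "degree P > 0"
  using assms is_unit_iff_degree by (auto simp: irreducible_def)

text \<open>Bezout for polynomials over a field: an element of least degree in the ideal (h, P)
  divides both generators, hence is a unit.\<close>

lemma inverse_mod_irreducible_exists:
  fixes P h :: "'a::field poly"
  assumes irr: "irreducible P" and not_dvd: "\<not> P dvd h"
  shows "\<exists>q. (h * q) mod P = 1"
proof -
  define I where "I x \<longleftrightarrow> (\<exists>s t. x = s * h + t * P)" for x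
  have I_h: "I h" unfolding I_def by (rule exI[of _ 1], rule exI[of _ 0]) simp
  have I_P: "I P" unfolding I_def by (rule exI[of _ 0], rule exI[of _ 1]) simp
  have "h \<noteq> 0" using not_dvd by auto
  then obtain g where g: "I g" "g \<noteq> 0" and minimal: "\<And>x. I x \<Longrightarrow> x \<noteq> 0 \<Longrightarrow> degree g \<le> degree x"
    using I_h ex_has_least_nat[of "\<lambda>x. I x \<and> x \<noteq> 0" h degree] by blast
  have g_dvd: "g dvd x" if "I x" for x
  proof (rule ccontr)
    assume "\<not> g dvd x"
    then have "x mod g \<noteq> 0" and "degree (x mod g) < degree g"
      using degree_mod_less[OF g(2)] by (auto simp: dvd_eq_mod_eq_0)
    moreover have "I (x mod g)"
    proof -
      obtain s t where "x = s * h + t * P" using \<open>I x\<close> unfolding I_def by blast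
      moreover obtain s' t' where "g = s' * h + t' * P" using \<open>I g\<close> unfolding I_def by blast
      ultimately have "x mod g = (s - (x div g) * s') * h + (t - (x div g) * t') * P"
        by (simp add: minus_div_mult_eq_mod[symmetric] algebra_simps)
      then show ?thesis unfolding I_def by blast
    qed
    ultimately show False using minimal by fastforce
  qed
  obtain k where P_eq: "P = g * k" using g_dvd[OF I_P] by (rule dvdE)
  have "\<not> is_unit k"
  proof
    assume "is_unit k"
    then have "P dvd g" using P_eq by (simp add: dvd_mult_unit_iff)
    with g_dvd[OF I_h] not_dvd show False by (blast intro: dvd_trans)
  qed
  then have "is_unit g" using irreducibleD[OF irr P_eq] by blast
  then obtain u where u: "1 = g * u" by (rule dvdE)
  obtain s t where "g = s * h + t * P" using g(1) unfolding I_def by blast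
  then have "h * (s * u) = 1 - (t * u) * P" using u by (simp add: algebra_simps)
  then have "(h * (s * u)) mod P = 1 mod P" by (simp add: mod_eq_dvd_iff)
  also have "\<dots> = 1" using irreducible_imp_degree_pos[OF irr] by (simp add: mod_poly_less)
  finally show ?thesis by blast
qed

lemma prime_elem_dvd_iff_of_dvd_diff:
  fixes P h x y :: "'a::idom"
  assumes "prime_elem P" and "\<not> P dvd h" and "P dvd h * x - y"
  shows "P dvd y \<longleftrightarrow> P dvd x"
proof -
  have "P dvd y \<longleftrightarrow> P dvd (h * x - y) + y"
    using assms(3) by (rule dvd_add_right_iff[symmetric])
  also have "\<dots> \<longleftrightarrow> P dvd x" using prime_elem_dvd_mult_iff[OF assms(1)] assms(2) by simp
  finally show ?thesis .
qed

lemma dvd_degree_less_imp_eq_0: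
  fixes p q :: "'a::idom poly"
  assumes "p dvd q" and "degree q < degree p"
  shows "q = 0"
  using dvd_imp_degree_le[OF assms(1)] assms(2) by fastforce

definition gen_numerator :: "'a::comm_ring_1 poly \<Rightarrow> (nat \<Rightarrow> 'a) \<Rightarrow> 'a poly" where
  "gen_numerator P s = (\<Sum>n<degree P. monom (\<Sum>d\<in>{n+1..degree P}. coeff P d * s (d - n - 1)) n)"

definition satisfies_rec :: "'a::comm_ring_1 poly \<Rightarrow> (nat \<Rightarrow> 'a) \<Rightarrow> bool" where
  "satisfies_rec P s \<longleftrightarrow> (\<forall>i. (\<Sum>d\<le>degree P. coeff P d * s (i + d)) = 0)"

lemma h_poly_eq_gen_numerator: "h_poly P y j = gen_numerator P (\<lambda>i. y i j)"
  unfolding h_poly_def gen_numerator_def ..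

lemma coeff_gen_numerator:
  "coeff (gen_numerator P s) m = (\<Sum>d\<in>{Suc m..degree P}. coeff P d * s (d - Suc m))"
  unfolding gen_numerator_def by (simp add: coeff_sum)

lemma degree_gen_numerator_less:
  assumes "degree P > 0"
  shows "degree (gen_numerator P s) < degree P"
proof -
  have "degree (gen_numerator P s) \<le> degree P - 1"
    by (rule degree_le) (auto simp: coeff_gen_numerator)
  then show ?thesis using assms by linarith
qed

lemma gen_numerator_0 [simp]: "gen_numerator P (\<lambda>i. 0) = 0"
  by (rule poly_eqI) (simp add: coeff_gen_numerator)

lemma gen_numerator_smult: "gen_numerator P (\<lambda>i. a * s i) = Polynomial.smult a (gen_numerator P s)"
  by (rule poly_eqI) (simp add: coeff_gen_numerator sum_distrib_left mult.left_commute)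

lemma gen_numerator_sum:
  "gen_numerator P (\<lambda>i. \<Sum>x\<in>X. s x i) = (\<Sum>x\<in>X. gen_numerator P (s x))"
  by (rule poly_eqI) (auto simp: coeff_gen_numerator coeff_sum sum_distrib_left intro: sum.swap)

lemma gen_numerator_eq_0_imp_head_0:
  fixes P :: "'a::idom poly"
  assumes "gen_numerator P s = 0" and "degree P > 0"
  shows "s 0 = 0"
proof -
  have "coeff (gen_numerator P s) (degree P - 1) = lead_coeff P * s 0"
    using assms(2) by (simp add: coeff_gen_numerator)
  moreover have "lead_coeff P \<noteq> 0" using assms(2) by auto
  ultimately show ?thesis using assms(1) by simp
qed

lemma satisfies_rec_shift:
  assumes "satisfies_rec P s"
  shows "satisfies_rec P (\<lambda>i. s (i + K))"
  unfolding satisfies_rec_def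
proof
  fix i
  have "(\<Sum>d\<le>degree P. coeff P d * s (i + K + d)) = 0"
    using assms unfolding satisfies_rec_def by blast
  then show "(\<Sum>d\<le>degree P. coeff P d * s (i + d + K)) = 0"
    by (simp add: ac_simps)
qed

text \<open>Multiplying by z shifts the sequence: z h_s = h_{s(.+1)} + s_0 P, the term s_0 P
  accounting for the coefficient that moves past z^{-1}.\<close>

lemma gen_numerator_shift:
  assumes "satisfies_rec P s"
  shows "pCons 0 (gen_numerator P s) = gen_numerator P (\<lambda>i. s (Suc i)) + Polynomial.smult (s 0) P"
proof (rule poly_eqI)
  fix m
  have "coeff (gen_numerator P (\<lambda>i. s (Suc i))) m = (\<Sum>d\<in>{Suc m..degree P}. coeff P d * s (d - m))"
    unfolding coeff_gen_numerator by (intro sum.cong) (auto simp: Suc_diff_Suc)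
  then have shifted: "coeff (gen_numerator P (\<lambda>i. s (Suc i)) + Polynomial.smult (s 0) P) m =
      (\<Sum>d\<in>{m..degree P}. coeff P d * s (d - m))"
    by (cases "m \<le> degree P") (simp_all add: sum.atLeast_Suc_atMost coeff_eq_0)
  have "coeff (pCons 0 (gen_numerator P s)) m = (\<Sum>d\<in>{m..degree P}. coeff P d * s (d - m))"
  proof (cases m)
    case 0
    have "(\<Sum>d\<le>degree P. coeff P d * s (0 + d)) = 0"
      using assms unfolding satisfies_rec_def by blast
    then show ?thesis by (simp add: 0 atLeast0AtMost)
  qed (simp add: coeff_gen_numerator)
  with shifted show "coeff (pCons 0 (gen_numerator P s)) m =
      coeff (gen_numerator P (\<lambda>i. s (Suc i)) + Polynomial.smult (s 0) P) m"
    by (simp only:)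
qed

lemma gen_numerator_shift_cong:
  assumes "satisfies_rec P s"
  shows "P dvd gen_numerator P (\<lambda>i. s (i + K)) - [:0,1:] ^ K * gen_numerator P s"
proof (induction K)
  case (Suc K)
  let ?h = "gen_numerator P s" and ?a = "gen_numerator P (\<lambda>i. s (i + K))"
    and ?b = "gen_numerator P (\<lambda>i. s (i + Suc K))"
  have "[:0,1:] * ?a = ?b + Polynomial.smult (s K) P"
    using gen_numerator_shift[OF satisfies_rec_shift[OF assms, of K]]
    unfolding pCons_0_as_mult[of ?a] by simp
  then have "?b = [:0,1:] * ?a - Polynomial.smult (s K) P"
    by (simp add: eq_diff_eq)
  then have step: "?b - [:0,1:] ^ Suc K * ?h =
      [:0,1:] * (?a - [:0,1:] ^ K * ?h) - Polynomial.smult (s K) P"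
    by (simp add: algebra_simps)
  show ?case
    unfolding step by (rule dvd_diff[OF dvd_mult[OF Suc.IH] dvd_smult[OF dvd_refl]])
qed simp

lemma gen_numerator_comb_cong:
  assumes "satisfies_rec P s"
  shows "P dvd gen_numerator P (\<lambda>n. \<Sum>j<k. c j * s (n + i + j))
                 - [:0,1:] ^ i * (\<Sum>j<k. monom (c j) j) * gen_numerator P s"
proof -
  have combination: "gen_numerator P (\<lambda>n. \<Sum>j<k. c j * s (n + i + j)) =
      (\<Sum>j<k. Polynomial.smult (c j) (gen_numerator P (\<lambda>n. s (n + (i + j)))))"
    unfolding gen_numerator_sum gen_numerator_smult by (simp only: add.assoc)
  have product: "[:0,1:] ^ i * (\<Sum>j<k. monom (c j) j) * gen_numerator P s =
      (\<Sum>j<k. Polynomial.smult (c j) ([:0,1:] ^ (i + j) * gen_numerator P s))"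
    unfolding sum_distrib_left sum_distrib_right
    by (intro sum.cong) (simp_all add: monom_altdef power_add mult.assoc)
  have difference: "gen_numerator P (\<lambda>n. \<Sum>j<k. c j * s (n + i + j))
                 - [:0,1:] ^ i * (\<Sum>j<k. monom (c j) j) * gen_numerator P s
      = (\<Sum>j<k. Polynomial.smult (c j)
           (gen_numerator P (\<lambda>n. s (n + (i + j))) - [:0,1:] ^ (i + j) * gen_numerator P s))"
    unfolding combination product smult_diff_right sum_subtractf ..
  show ?thesis
    unfolding difference by (intro dvd_sum dvd_smult gen_numerator_shift_cong[OF assms])
qed

lemma pow_mat_Suc_left:
  assumes "A \<in> carrier_mat n n"
  shows "A ^\<^sub>m Suc k = A * A ^\<^sub>m k"
proof (induction k)
  case (Suc k)
  have "A ^\<^sub>m Suc (Suc k) = (A * A ^\<^sub>m k) * A" using Suc by simp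
  also have "\<dots> = A * (A ^\<^sub>m k * A)" using assms by (simp add: assoc_mult_mat[of _ n n _ n _ n])
  finally show ?case by simp
qed (use assms in simp)

text \<open>The coefficients N_k of the adjugate N = adj(zI - A) satisfy N_{k-1} - N_k A = P_k I,
  by comparing coefficients in N (zI - A) = P(z) I.\<close>

lemma adj_char_poly_matrix_coeff:
  fixes A :: "'a::comm_ring_1 mat"
  assumes A: "A \<in> carrier_mat n n" and ab: "a < n" "b < n"
  defines "N \<equiv> adj_mat (char_poly_matrix A)"
  shows "(if k = 0 then 0 else coeff (N $$ (a,b)) (k - 1)) - (\<Sum>l<n. coeff (N $$ (a,l)) k * A $$ (l,b))
         = (if a = b then coeff (char_poly A) k else 0)"
proof -
  define M where "M = char_poly_matrix A"
  have M: "M \<in> carrier_mat n n" using A by (simp add: M_def)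
  have N: "N \<in> carrier_mat n n" using adj_mat(1)[OF M] by (simp add: N_def M_def)
  have "(N * M) $$ (a,b) = (\<Sum>l<n. N $$ (a,l) * M $$ (l,b))"
    using ab N M by (simp add: scalar_prod_def lessThan_atLeast0)
  also have "\<dots> = (\<Sum>l<n. N $$ (a,l) * ((if l = b then [:0,1:] else 0) + [: - A $$ (l,b) :]))"
    using ab A by (intro sum.cong) (auto simp: M_def char_poly_matrix_def)
  also have "\<dots> = (\<Sum>l<n. (if l = b then N $$ (a,l) * [:0,1:] else 0))
      + (\<Sum>l<n. N $$ (a,l) * [: - A $$ (l,b) :])"
    unfolding distrib_left sum.distrib by (intro arg_cong2[where f="(+)"] sum.cong refl) simp_all
  also have "(\<Sum>l<n. (if l = b then N $$ (a,l) * [:0,1:] else 0)) = N $$ (a,b) * [:0,1:]"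
    using ab by simp
  finally have NM: "(N * M) $$ (a,b) = N $$ (a,b) * [:0,1:] + (\<Sum>l<n. N $$ (a,l) * [: - A $$ (l,b) :])" .
  have shift: "coeff (N $$ (a,b) * [:0,1:]) k = (if k = 0 then 0 else coeff (N $$ (a,b)) (k - 1))"
    unfolding mult.commute[of _ "[:0,1:]"] pCons_0_as_mult[symmetric] by (cases k) simp_all
  have lower: "coeff (\<Sum>l<n. N $$ (a,l) * [: - A $$ (l,b) :]) k =
      - (\<Sum>l<n. coeff (N $$ (a,l)) k * A $$ (l,b))"
    by (simp add: coeff_sum sum_negf[symmetric] mult.commute[of _ "[:_:]"] mult.commute[of "A $$ _"])
  have "(N * M) $$ (a,b) = (if a = b then char_poly A else 0)"
    using adj_mat(3)[OF M] ab by (simp add: N_def M_def char_poly_def)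
  then have "(if a = b then coeff (char_poly A) k else 0) = coeff ((N * M) $$ (a,b)) k"
    by simp
  also have "\<dots> = coeff (N $$ (a,b) * [:0,1:]) k + coeff (\<Sum>l<n. N $$ (a,l) * [: - A $$ (l,b) :]) k"
    unfolding NM coeff_add ..
  finally show ?thesis unfolding shift lower by simp
qed

lemma cayley_hamilton_orbit:
  fixes A :: "'a::comm_ring_1 mat"
  assumes A: "A \<in> carrier_mat n n" and u: "\<And>k. u k \<in> carrier_vec n"
    and step: "\<And>k. u (Suc k) = A *\<^sub>v u k" and i: "i < n"
  shows "(\<Sum>d\<le>degree (char_poly A). coeff (char_poly A) d * u d $ i) = 0"
proof -
  define P where "P = char_poly A"
  define N where "N = adj_mat (char_poly_matrix A)"
  define c where "c k a b = coeff (N $$ (a,b)) k" for k a b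
  define G where "G k = (\<Sum>l<n. c k i l * u (Suc k) $ l)" for k
  define F where "F k = (if k = 0 then 0 else G (k - 1))" for k
  have u_Suc: "u (Suc k) $ l = (\<Sum>b<n. A $$ (l,b) * u k $ b)" if "l < n" for k l
    using that A u[of k] by (simp add: step scalar_prod_def lessThan_atLeast0)
  have G: "G k = (\<Sum>b<n. (\<Sum>l<n. c k i l * A $$ (l,b)) * u k $ b)" for k
  proof -
    have "G k = (\<Sum>l<n. \<Sum>b<n. c k i l * (A $$ (l,b) * u k $ b))"
      unfolding G_def by (intro sum.cong refl) (simp add: u_Suc sum_distrib_left)
    also have "\<dots> = (\<Sum>b<n. (\<Sum>l<n. c k i l * A $$ (l,b)) * u k $ b)"
      by (subst sum.swap) (simp add: sum_distrib_right mult.assoc)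
    finally show ?thesis .
  qed
  have telescope: "F k - F (Suc k) = coeff P k * u k $ i" for k
  proof -
    have "F k = (\<Sum>b<n. (if k = 0 then 0 else c (k - 1) i b) * u k $ b)"
      by (cases k) (simp_all add: F_def G_def)
    then have "F k - F (Suc k) =
        (\<Sum>b<n. ((if k = 0 then 0 else c (k - 1) i b) - (\<Sum>l<n. c k i l * A $$ (l,b))) * u k $ b)"
      by (simp add: F_def G left_diff_distrib sum_subtractf)
    also have "\<dots> = (\<Sum>b<n. (if i = b then coeff P k * u k $ b else 0))"
    proof (intro sum.cong refl)
      fix b assume "b \<in> {..<n}"
      then have "(if k = 0 then 0 else c (k - 1) i b) - (\<Sum>l<n. c k i l * A $$ (l,b)) =
          (if i = b then coeff P k else 0)"
        unfolding c_def N_def P_def using adj_char_poly_matrix_coeff[OF A i] by simp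
      then show "((if k = 0 then 0 else c (k - 1) i b) - (\<Sum>l<n. c k i l * A $$ (l,b))) * u k $ b =
          (if i = b then coeff P k * u k $ b else 0)" by simp
    qed
    also have "\<dots> = coeff P k * u k $ i" using i by simp
    finally show ?thesis .
  qed
  define D where "D = Suc (degree P + (\<Sum>l<n. degree (N $$ (i,l))))"
  have "c D i l = 0" if "l < n" for l
  proof -
    have "degree (N $$ (i,l)) \<le> (\<Sum>l<n. degree (N $$ (i,l)))"
      using that by (intro member_le_sum) auto
    then show ?thesis unfolding c_def by (intro coeff_eq_0) (simp add: D_def)
  qed
  then have "F (Suc D) = 0" by (simp add: F_def G_def)
  have "(\<Sum>d\<le>degree P. coeff P d * u d $ i) = (\<Sum>k<Suc D. coeff P k * u k $ i)"
    by (rule sum.mono_neutral_left) (auto simp: D_def coeff_eq_0)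
  also have "\<dots> = (\<Sum>k<Suc D. F k - F (Suc k))" by (simp add: telescope)
  also have "\<dots> = F 0 - F (Suc D)" by (rule sum_lessThan_telescope')
  also have "\<dots> = 0" using \<open>F (Suc D) = 0\<close> by (simp add: F_def)
  finally show ?thesis by (simp add: P_def)
qed

lemma satisfies_rec_char_poly_output:
  fixes A B :: "'a::comm_ring_1 mat"
  assumes A: "A \<in> carrier_mat p p" and B: "B \<in> carrier_mat w p"
    and x0: "x0 \<in> carrier_vec p" and l: "l < w"
  shows "satisfies_rec (char_poly A) (\<lambda>i. (B *\<^sub>v (A ^\<^sub>m i *\<^sub>v x0)) $ l)"
  unfolding satisfies_rec_def
proof
  fix i
  define u where "u d = A ^\<^sub>m (i + d) *\<^sub>v x0" for d
  have u: "u d \<in> carrier_vec p" for d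
    unfolding u_def using A x0 by (intro mult_mat_vec_carrier[of _ p p]) auto
  have u_Suc: "u (Suc d) = A *\<^sub>v u d" for d
    unfolding u_def add_Suc_right pow_mat_Suc_left[OF A]
    using A x0 by (simp add: assoc_mult_mat_vec[of _ p p _ p])
  have output_coord: "(B *\<^sub>v u d) $ l = (\<Sum>m<p. B $$ (l,m) * u d $ m)" for d
    using B l u[of d] by (simp add: scalar_prod_def lessThan_atLeast0)
  have "(\<Sum>d\<le>degree (char_poly A). coeff (char_poly A) d * (B *\<^sub>v u d) $ l) =
      (\<Sum>m<p. B $$ (l,m) * (\<Sum>d\<le>degree (char_poly A). coeff (char_poly A) d * u d $ m))"
    unfolding output_coord sum_distrib_left
    by (subst sum.swap) (simp add: mult.left_commute)
  also have "\<dots> = 0"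
    by (simp add: cayley_hamilton_orbit[of A p u, OF A u u_Suc])
  finally show "(\<Sum>d\<le>degree (char_poly A). coeff (char_poly A) d * (B *\<^sub>v (A ^\<^sub>m (i + d) *\<^sub>v x0)) $ l) = 0"
    by (simp add: u_def)
qed

lemma comb_vanishes_iff_dvd:
  fixes P :: "'a::field poly" and s c :: "'b \<Rightarrow> nat \<Rightarrow> 'a"
  assumes P: "degree P > 0" and rec: "\<And>l. l \<in> L \<Longrightarrow> satisfies_rec P (s l)"
  shows "(\<forall>i. (\<Sum>l\<in>L. \<Sum>j<k. c l j * s l (i + j)) = 0) \<longleftrightarrow>
         P dvd (\<Sum>l\<in>L. (\<Sum>j<k. monom (c l j) j) * gen_numerator P (s l))"
proof -
  define S where "S = (\<Sum>l\<in>L. (\<Sum>j<k. monom (c l j) j) * gen_numerator P (s l))"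
  define T where "T i n = (\<Sum>l\<in>L. \<Sum>j<k. c l j * s l (n + i + j))" for i n
  have T_cong: "P dvd gen_numerator P (T i) - [:0,1:] ^ i * S" for i
  proof -
    have "gen_numerator P (T i) = (\<Sum>l\<in>L. gen_numerator P (\<lambda>n. \<Sum>j<k. c l j * s l (n + i + j)))"
      unfolding T_def by (rule gen_numerator_sum)
    moreover have "[:0,1:] ^ i * S =
        (\<Sum>l\<in>L. [:0,1:] ^ i * ((\<Sum>j<k. monom (c l j) j) * gen_numerator P (s l)))"
      unfolding S_def by (rule sum_distrib_left)
    moreover have "P dvd (\<Sum>l\<in>L. gen_numerator P (\<lambda>n. \<Sum>j<k. c l j * s l (n + i + j))
          - [:0,1:] ^ i * ((\<Sum>j<k. monom (c l j) j) * gen_numerator P (s l)))"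
    proof (intro dvd_sum)
      fix l assume "l \<in> L"
      show "P dvd gen_numerator P (\<lambda>n. \<Sum>j<k. c l j * s l (n + i + j))
          - [:0,1:] ^ i * ((\<Sum>j<k. monom (c l j) j) * gen_numerator P (s l))"
        using gen_numerator_comb_cong[OF rec[OF \<open>l \<in> L\<close>]] by (simp only: mult.assoc)
    qed
    ultimately show ?thesis by (simp only: sum_subtractf)
  qed
  show ?thesis unfolding S_def[symmetric]
  proof
    assume "\<forall>i. (\<Sum>l\<in>L. \<Sum>j<k. c l j * s l (i + j)) = 0"
    then have "T 0 = (\<lambda>n. 0)" unfolding T_def by simp
    then show "P dvd S" using T_cong[of 0] by simp
  next
    assume "P dvd S"
    show "\<forall>i. (\<Sum>l\<in>L. \<Sum>j<k. c l j * s l (i + j)) = 0"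
    proof
      fix i
      have "P dvd gen_numerator P (T i)"
        using T_cong[of i] dvd_mult[OF \<open>P dvd S\<close>, of "[:0,1:] ^ i"] by (metis diff_add_cancel dvd_add)
      then have "gen_numerator P (T i) = 0"
        using degree_gen_numerator_less[OF P] by (rule dvd_degree_less_imp_eq_0)
      then have "T i 0 = 0" using P by (rule gen_numerator_eq_0_imp_head_0)
      then show "(\<Sum>l\<in>L. \<Sum>j<k. c l j * s l (i + j)) = 0" by (simp add: T_def)
    qed
  qed
qed

lemma inv_mod_irreducible:
  assumes "irreducible P" and "\<not> P dvd h"
  shows "(h * inv_mod P h) mod P = 1"
  unfolding inv_mod_def by (rule someI_ex[OF inverse_mod_irreducible_exists[OF assms]])

lemma h_poly_hbar_cong:
  assumes "(h_poly P y 0 * inv_mod P (h_poly P y 0)) mod P = 1"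
  shows "P dvd h_poly P y 0 * hbar P y j - h_poly P y j"
proof -
  let ?h0 = "h_poly P y 0" and ?q = "inv_mod P (h_poly P y 0)"
  have "(?h0 * hbar P y j) mod P = (?h0 * ?q * h_poly P y j) mod P"
    unfolding hbar_def by (simp add: mod_mult_right_eq mult.assoc)
  also have "\<dots> = (((?h0 * ?q) mod P) * h_poly P y j) mod P" by (simp add: mod_mult_left_eq)
  also have "\<dots> = h_poly P y j mod P" using assms by simp
  finally show ?thesis by (simp add: mod_eq_dvd_iff)
qed

lemma h_poly_comb_hbar_cong:
  assumes inv: "(h_poly P y 0 * inv_mod P (h_poly P y 0)) mod P = 1" and v: "1 \<le> v"
  shows "P dvd h_poly P y 0 * (ws 0 + (\<Sum>l\<in>{2..v}. ws (l - 1) * hbar P y (l - 1)))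
                 - (\<Sum>l=1..v. ws (l - 1) * h_poly P y (l - 1))"
proof -
  have "(\<Sum>l=1..v. ws (l - 1) * h_poly P y (l - 1)) =
      ws 0 * h_poly P y 0 + (\<Sum>l\<in>{2..v}. ws (l - 1) * h_poly P y (l - 1))"
    using v by (simp add: sum.atLeast_Suc_atMost numeral_2_eq_2)
  then have "h_poly P y 0 * (ws 0 + (\<Sum>l\<in>{2..v}. ws (l - 1) * hbar P y (l - 1)))
                 - (\<Sum>l=1..v. ws (l - 1) * h_poly P y (l - 1)) =
      (\<Sum>l\<in>{2..v}. ws (l - 1) * (h_poly P y 0 * hbar P y (l - 1) - h_poly P y (l - 1)))"
    by (simp add: algebra_simps sum_distrib_left sum_subtractf)
  also have "P dvd \<dots>"
    by (intro dvd_sum dvd_mult h_poly_hbar_cong[OF inv])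
  finally show ?thesis .
qed

lemma dual_gen_comb_0:
  assumes "1 \<le> v"
  shows "(\<Sum>l=1..v. c l * dual_gen P y l 0) = c 1 * P - (\<Sum>l\<in>{2..v}. c l * hbar P y (l - 1))"
proof -
  have "(\<Sum>l\<in>{2..v}. c l * dual_gen P y l 0) = - (\<Sum>l\<in>{2..v}. c l * hbar P y (l - 1))"
    by (simp add: dual_gen_def sum_negf[symmetric])
  then show ?thesis
    using assms by (simp add: sum.atLeast_Suc_atMost numeral_2_eq_2 dual_gen_def)
qed

lemma dual_gen_comb_coord:
  assumes "1 \<le> idx" and "idx < v"
  shows "(\<Sum>l=1..v. c l * dual_gen P y l idx) = c (Suc idx)"
proof -
  have "(\<Sum>l=1..v. c l * dual_gen P y l idx) = (\<Sum>l=1..v. if l = Suc idx then c l else 0)"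
    using assms by (intro sum.cong refl) (auto simp: dual_gen_def)
  also have "\<dots> = c (Suc idx)" using assms by simp
  finally show ?thesis .
qed

lemma in_dual_lattice_iff_dvd:
  assumes v: "1 \<le> v"
  shows "in_dual_lattice P y v ws \<longleftrightarrow> P dvd ws 0 + (\<Sum>l\<in>{2..v}. ws (l - 1) * hbar P y (l - 1))"
proof
  assume "in_dual_lattice P y v ws"
  then obtain c where c: "\<And>idx. idx < v \<Longrightarrow> ws idx = (\<Sum>l=1..v. c l * dual_gen P y l idx)"
    unfolding in_dual_lattice_def by blast
  have "ws (l - 1) = c l" if "l \<in> {2..v}" for l
    using that c[of "l - 1"] dual_gen_comb_coord[of "l - 1" v c] by auto
  then have "(\<Sum>l\<in>{2..v}. ws (l - 1) * hbar P y (l - 1)) = (\<Sum>l\<in>{2..v}. c l * hbar P y (l - 1))"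
    by simp
  moreover have "ws 0 = c 1 * P - (\<Sum>l\<in>{2..v}. c l * hbar P y (l - 1))"
    using c[of 0] v unfolding dual_gen_comb_0[OF v] by simp
  ultimately have "ws 0 + (\<Sum>l\<in>{2..v}. ws (l - 1) * hbar P y (l - 1)) = c 1 * P"
    by simp
  then show "P dvd ws 0 + (\<Sum>l\<in>{2..v}. ws (l - 1) * hbar P y (l - 1))" by simp
next
  assume "P dvd ws 0 + (\<Sum>l\<in>{2..v}. ws (l - 1) * hbar P y (l - 1))"
  then obtain q where q: "ws 0 + (\<Sum>l\<in>{2..v}. ws (l - 1) * hbar P y (l - 1)) = P * q" by (rule dvdE)
  define c where "c l = (if l = 1 then q else ws (l - 1))" for l
  have "ws idx = (\<Sum>l=1..v. c l * dual_gen P y l idx)" if "idx < v" for idx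
  proof (cases "idx = 0")
    case True
    have "(\<Sum>l\<in>{2..v}. c l * hbar P y (l - 1)) = (\<Sum>l\<in>{2..v}. ws (l - 1) * hbar P y (l - 1))"
      by (intro sum.cong refl) (auto simp: c_def)
    then show ?thesis unfolding True dual_gen_comb_0[OF v] using q by (simp add: c_def algebra_simps)
  next
    case False
    then show ?thesis using that dual_gen_comb_coord[of idx v c] by (simp add: c_def)
  qed
  then show "in_dual_lattice P y v ws" unfolding in_dual_lattice_def by blast
qed

theorem proposition1:
  fixes p w v k :: nat
    and A B :: "bit mat" and x0 :: "bit vec"
    and wc :: "nat \<Rightarrow> nat \<Rightarrow> bit"
  assumes "p > 0" and "w > 0" and "1 \<le> v" and "v \<le> w"
    and "A \<in> carrier_mat p p" and "B \<in> carrier_mat w p"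
    and "x0 \<in> carrier_vec p" and "x0 \<noteq> 0\<^sub>v p"
    and "irreducible (char_poly A)"
    and "h_poly (char_poly A) (out_seq A B x0) 0 \<noteq> 0"
    and "k \<ge> 1"
  shows "(\<forall>i. (\<Sum>l=1..v. \<Sum>j<k. wc j (l - 1) * out_seq A B x0 (i + j) (l - 1)) = 0)
    \<longleftrightarrow> in_dual_lattice (char_poly A) (out_seq A B x0) v
          (\<lambda>idx. \<Sum>j<k. monom (wc j idx) j)"
proof -
  define P where "P = char_poly A"
  define y where "y = out_seq A B x0"
  define ws where "ws idx = (\<Sum>j<k. monom (wc j idx) j)" for idx
  have irr: "irreducible P" and h0: "h_poly P y 0 \<noteq> 0"
    using assms(9,10) unfolding P_def y_def .
  have deg_P: "degree P > 0" by (rule irreducible_imp_degree_pos[OF irr])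
  have rec: "satisfies_rec P (\<lambda>i. y i (l - 1))" if "l \<in> {1..v}" for l
    unfolding P_def y_def out_seq_def using that assms(4)
    by (intro satisfies_rec_char_poly_output[OF assms(5,6,7)]) auto
  have "\<not> P dvd h_poly P y 0"
    using dvd_degree_less_imp_eq_0 h0 degree_gen_numerator_less[OF deg_P]
    unfolding h_poly_eq_gen_numerator by blast
  then have "P dvd h_poly P y 0 * (ws 0 + (\<Sum>l\<in>{2..v}. ws (l - 1) * hbar P y (l - 1)))
                 - (\<Sum>l=1..v. ws (l - 1) * h_poly P y (l - 1))"
    by (intro h_poly_comb_hbar_cong inv_mod_irreducible irr assms(3))
  then have "P dvd (\<Sum>l=1..v. ws (l - 1) * h_poly P y (l - 1)) \<longleftrightarrow> in_dual_lattice P y v ws"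
    using \<open>\<not> P dvd h_poly P y 0\<close> in_dual_lattice_iff_dvd[OF assms(3)]
      prime_elem_dvd_iff_of_dvd_diff[OF field_poly_irreducible_imp_prime[OF irr]] by blast
  moreover have "(\<forall>i. (\<Sum>l=1..v. \<Sum>j<k. wc j (l - 1) * y (i + j) (l - 1)) = 0) \<longleftrightarrow>
      P dvd (\<Sum>l=1..v. ws (l - 1) * h_poly P y (l - 1))"
    using comb_vanishes_iff_dvd[OF deg_P, where s="\<lambda>l i. y i (l - 1)" and c="\<lambda>l j. wc j (l - 1)"]
      rec unfolding ws_def h_poly_eq_gen_numerator by blast
  ultimately show ?thesis unfolding P_def y_def ws_def by simp
qed

end
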